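(* Let $u=s_{i_1}\cdots s_{i_l}$ and $v=s_{j_1}\cdots s_{j_m}$ ($m\ge1$) be reduced words for glides in $\hat S_n$, $v$ of offset $k_2$, such that $vu$ is reduced, and let $\alpha_1,\dots,\alpha_n\in\mathbb R$ satisfy $\alpha_i<\alpha_j$ whenever $i\triangleleft j$ in the wiring diagram of $v|u$. Let $\tilde v=\rho^{-k_2}(v)$ with reduced word $s_{j_1-k_2}\cdots s_{j_m-k_2}$. Let $b>c$ be real numbers in the same connected component of $\mathbb R\setminus\{\alpha_1,\dots,\alpha_n\}$ with $f(b)=f(c)$, where $f(t)=\prod_{j=1}^n(t-\alpha_j)$, and put $B_j=\frac{b-\alpha_j}{c-\alpha_j}$. If $(t'_1,\dots,t'_n)$ is a representative of $t(\tilde v)$, then $$t'_1\log B_1+\dots+t'_n\log B_n<0.$$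
   Context: $\hat S_n$: generators $s_0,\dots,s_{n-1}$ (indices mod $n$), relations $s_i^2=1$, $s_is_js_i=s_js_is_j$ if $i-j\equiv\pm1$, $s_is_j=s_js_i$ if $i-j\not\equiv0,\pm1$; $\rho$ is the automorphism $s_i\mapsto s_{i+1}$. $\phi:\hat S_n\to S_n$, $s_i\mapsto(i\ i+1)$, $s_0\mapsto(1\ n)$; a glide of offset $k$ is $g$ with $\phi(g)(j)\equiv j+k\pmod n$. Wiring diagram: letters drawn left to right on a cylinder with wires in positions $1,\dots,n$ (mod $n$), $s_i$ a crossing of positions $i,i+1$ ($s_0$: $n$ and $1$); the upper wire of $s_i$ passes from position $i+1$ to $i$ (for $s_0$ from $1$ to $n$). In the diagram of $v|u$, wire $i$ is the wire in position $i$ at the cut between $v$ and $u$, and $i\triangleleft j$ means wires $i,j$ cross with $j$ the upper wire. Trajectory of a glide $g$ with a reduced word: lift the diagram of $|g$ to the universal cover (integer positions, wires labelled by starting position); a chamber with set $S$ of underlying wire labels has label $(\mathbf s_i)$, $\mathbf s_i=\lceil\max\{b\in S:b\equiv i\bmod n\}/n\rceil$; $t(g)\in\mathbb Z^n/\mathbb Z(1,\dots,1)$ is the label of the chamber directly above wire $1$ at the right end minus that at the left end. *)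

theory Defs
  imports "HOL-Analysis.Analysis"
begin

text \<open>Periodic transposition of integer positions realising the generator s_i
  (it exchanges positions p and p+1 for every p congruent to i mod n).
  The group element of a word is the corresponding affine permutation of the integers.\<close>
definition sw :: "nat \<Rightarrow> nat \<Rightarrow> int \<Rightarrow> int" where
  "sw n i p = (if p mod int n = int i mod int n then p + 1
               else if p mod int n = (int i + 1) mod int n then p - 1 else p)"

definition word_perm :: "nat \<Rightarrow> nat list \<Rightarrow> int \<Rightarrow> int" where
  "word_perm n ws = foldr (\<lambda>i f. sw n i \<circ> f) ws id"

definition is_word :: "nat \<Rightarrow> nat list \<Rightarrow> bool" where
  "is_word n ws \<longleftrightarrow> set ws \<subseteq> {..<n}"

definition reduced :: "nat \<Rightarrow> nat list \<Rightarrow> bool" where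
  "reduced n ws \<longleftrightarrow> is_word n ws \<and>
     (\<forall>ws'. is_word n ws' \<and> word_perm n ws' = word_perm n ws \<longrightarrow> length ws \<le> length ws')"

definition tr :: "nat \<Rightarrow> nat \<Rightarrow> nat \<Rightarrow> nat" where
  "tr a b x = (if x = a then b else if x = b then a else x)"

definition phi_gen :: "nat \<Rightarrow> nat \<Rightarrow> nat \<Rightarrow> nat" where
  "phi_gen n i = (if i = 0 then tr 1 n else tr i (i + 1))"

definition phi :: "nat \<Rightarrow> nat list \<Rightarrow> nat \<Rightarrow> nat" where
  "phi n ws = foldr (\<lambda>i f. phi_gen n i \<circ> f) ws id"

definition glide :: "nat \<Rightarrow> nat list \<Rightarrow> int \<Rightarrow> bool" where
  "glide n ws k \<longleftrightarrow> (\<forall>j\<in>{1..n}. int (phi n ws j) mod int n = (int j + k) mod int n)"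

definition rho_shift :: "nat \<Rightarrow> int \<Rightarrow> nat list \<Rightarrow> nat list" where
  "rho_shift n k ws = map (\<lambda>j. nat ((int j - k) mod int n)) ws"

text \<open>Arrangement in the universal cover after the first t letters of a diagram whose
  left end has the identity arrangement: maps a position to the label of the wire there.\<close>
definition arr :: "nat \<Rightarrow> nat list \<Rightarrow> nat \<Rightarrow> int \<Rightarrow> int" where
  "arr n ws t = foldl (\<lambda>f i. f \<circ> sw n i) id (take t ws)"

text \<open>Arrangement of the diagram of v|u after the first t letters of v@u, wires labelled
  by their position at the cut between v and u.\<close>
definition cut_arr :: "nat \<Rightarrow> nat list \<Rightarrow> nat list \<Rightarrow> nat \<Rightarrow> int \<Rightarrow> int" where
  "cut_arr n v u t = arr n (rev v) (length v) \<circ> arr n (v @ u) t"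

definition cyl :: "nat \<Rightarrow> int \<Rightarrow> nat" where
  "cyl n x = nat ((x - 1) mod int n + 1)"

text \<open>i \<triangleleft> j in the wiring diagram of v|u: wires i and j cross, j being the upper wire.\<close>
definition lessdot :: "nat \<Rightarrow> nat list \<Rightarrow> nat list \<Rightarrow> nat \<Rightarrow> nat \<Rightarrow> bool" where
  "lessdot n v u i j \<longleftrightarrow> (\<exists>t < length (v @ u). \<exists>k::int.
      cyl n (cut_arr n v u t (int ((v @ u) ! t) + k * int n)) = i \<and>
      cyl n (cut_arr n v u t (int ((v @ u) ! t) + k * int n + 1)) = j)"

text \<open>Label of a chamber with set S of underlying wire labels.\<close>
definition chamber_label :: "nat \<Rightarrow> int set \<Rightarrow> nat \<Rightarrow> int" where
  "chamber_label n S i =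
     ceiling (real_of_int (GREATEST b. b \<in> S \<and> b mod int n = int i mod int n) / real n)"

text \<open>Trajectory t(g) (a representative, indexed by 1..n): label of the chamber directly above
  wire 1 at the right end minus the one at the left end, in the diagram of |g.\<close>
definition traj :: "nat \<Rightarrow> nat list \<Rightarrow> nat \<Rightarrow> int" where
  "traj n g i =
     (let A = arr n g (length g); q = (THE q. A q = 1)
      in chamber_label n (A ` {..q}) i - chamber_label n {..1} i)"

end

theory Submission
  imports Defs
begin

(* Put x_j = ln B_j.  Since f(b) = f(c) the x_j sum to zero, and since no alpha_j lies in
   [c, b], x_j > 0 when alpha_j < c and x_j < 0 when alpha_j > b.  Hence the sum is negative
   as soon as t' is not constant and is at least as large on every wire with alpha_j > b as
   on every wire with alpha_j < c.  Both facts are read off the affine permutation W of v: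
   up to a common constant, n t_i is the displacement W p - p at the position p of wire i in
   a window of n consecutive positions.  A displacement gap of n forces two wires to cross,
   so t_j < t_i gives j \<triangleleft> i, hence alpha_j < alpha_i.  A constant t makes W a
   translation; then the two wires crossed by the first letter of v cross back, which the
   ordering of the alpha_j forbids. *)

lemma word_perm_Nil [simp]: "word_perm n [] = id"
  by (simp add: word_perm_def)

lemma word_perm_Cons [simp]: "word_perm n (i # ws) = sw n i \<circ> word_perm n ws"
  by (simp add: word_perm_def)

lemma word_perm_append: "word_perm n (xs @ ys) = word_perm n xs \<circ> word_perm n ys"
  by (induction xs) (simp_all add: comp_assoc)

lemma foldl_comp_sw: "foldl (\<lambda>f i. f \<circ> sw n i) h ws = h \<circ> word_perm n ws"
  by (induction ws arbitrary: h) (simp_all add: comp_assoc)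

lemma arr_eq_word_perm: "arr n ws t = word_perm n (take t ws)"
  by (simp add: arr_def foldl_comp_sw)

lemma mod_succ_neq:
  assumes "n \<ge> 2" shows "((a::int) + 1) mod int n \<noteq> a mod int n"
proof
  assume "(a + 1) mod int n = a mod int n"
  then have "int n dvd 1"
    by (metis add_diff_cancel_left' mod_eq_dvd_iff add.commute)
  then show False using assms by simp
qed

lemma sw_sw [simp]:
  assumes "n \<ge> 2" shows "sw n i (sw n i p) = p"
proof -
  have "(p - 1) mod int n = int i mod int n" if "p mod int n = (int i + 1) mod int n"
    using mod_diff_cong[OF that, of 1 1] by simp
  then show ?thesis
    using mod_succ_neq[OF assms, of p] mod_succ_neq[OF assms, of "p - 1"]
      mod_succ_neq[OF assms, of "int i"]
    by (auto simp: sw_def intro: mod_add_cong)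
qed

(* word_perm n ws sends a position after ws to the initial position of the wire found there;
   its inverse word_perm n (rev ws) sends a wire to its position after ws. *)
lemma word_perm_rev_left_inverse:
  assumes "n \<ge> 2" shows "word_perm n (rev ws) (word_perm n ws p) = p"
  using assms by (induction ws arbitrary: p) (simp_all add: word_perm_append)

lemma word_perm_rev_right_inverse:
  assumes "n \<ge> 2" shows "word_perm n ws (word_perm n (rev ws) p) = p"
  using word_perm_rev_left_inverse[OF assms, of "rev ws"] by simp

lemma sw_periodic: "sw n i (p + j * int n) = sw n i p + j * int n"
  by (simp add: sw_def)

lemma word_perm_periodic: "word_perm n ws (p + j * int n) = word_perm n ws p + j * int n"
  by (induction ws arbitrary: p) (simp_all add: sw_periodic)

lemma sw_inversion:
  assumes "p < p'" "sw n i p' < sw n i p"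
  shows "p' = p + 1" "p mod int n = int i mod int n"
  using assms by (auto simp: sw_def split: if_splits)

lemma sw_mod_cong: "a mod int n = b mod int n \<Longrightarrow> sw n i a mod int n = sw n i b mod int n"
  unfolding sw_def by (auto intro: mod_add_cong mod_diff_cong)

lemma phi_gen_sw:
  assumes "n \<ge> 2" "i < n" "j \<in> {1..n}"
  shows "phi_gen n i j \<in> {1..n} \<and> int (phi_gen n i j) mod int n = sw n i (int j) mod int n"
proof -
  have "int j mod int n = (if j = n then 0 else int j)" using assms(3) by auto
  moreover have "(int i + 1) mod int n = (if i + 1 = n then 0 else int i + 1)"
  proof (cases "i + 1 = n")
    case True
    then have e: "int i + 1 = int n" by simp
    show ?thesis unfolding e using True by simp
  qed (use assms(2) in simp)
  moreover have "(int n + 1) mod int n = 1" using assms(1) by simp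
  ultimately show ?thesis
    using assms by (auto simp: phi_gen_def tr_def sw_def)
qed

lemma phi_word_perm:
  assumes "n \<ge> 2" "is_word n ws" "j \<in> {1..n}"
  shows "phi n ws j \<in> {1..n} \<and> int (phi n ws j) mod int n = word_perm n ws (int j) mod int n"
  using assms(2)
proof (induction ws)
  case Nil
  then show ?case using assms(3) by (simp add: phi_def)
next
  case (Cons i ws)
  then have IH: "phi n ws j \<in> {1..n}" "int (phi n ws j) mod int n = word_perm n ws (int j) mod int n"
    and "i < n" by (auto simp: is_word_def)
  then show ?case
    using phi_gen_sw[OF assms(1) \<open>i < n\<close> IH(1)] sw_mod_cong[OF IH(2), of i]
    by (simp add: phi_def)
qed

lemma mod_shift_iff: "((a::int) mod m = b mod m) \<longleftrightarrow> ((a + k) mod m = (b + k) mod m)"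
  by (simp add: mod_eq_dvd_iff)

lemma glide_word_perm_mod:
  assumes "n \<ge> 2" "is_word n ws" "glide n ws k"
  shows "word_perm n ws p mod int n = (p + k) mod int n"
proof -
  define j where "j = nat ((p - 1) mod int n + 1)"
  have b: "0 \<le> (p - 1) mod int n" "(p - 1) mod int n < int n" using assms(1) by simp_all
  then have ij: "int j = (p - 1) mod int n + 1" by (simp add: j_def)
  then have j: "j \<in> {1..n}" using b by auto
  have p: "p = int j + ((p - 1) div int n) * int n"
    using ij by (simp add: mod_div_mult_eq[symmetric] algebra_simps)
  have "word_perm n ws p mod int n = word_perm n ws (int j) mod int n"
    by (subst p) (simp add: word_perm_periodic)
  also have "\<dots> = (int j + k) mod int n"
    using phi_word_perm[OF assms(1,2) j] assms(3) j by (simp add: glide_def)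
  also have "\<dots> = (p + k) mod int n"
  proof -
    have "p + k = (int j + k) + ((p - 1) div int n) * int n" using p by simp
    then show ?thesis by (metis mod_mult_self1)
  qed
  finally show ?thesis .
qed

lemma glide_word_perm_mod_one:
  assumes n: "n \<ge> 2" and w: "is_word n v" and g: "glide n v k"
    and e: "word_perm n v e = 1 + k"
  shows "e mod int n = 1 mod int n"
  using glide_word_perm_mod[OF n w g, of e] e mod_shift_iff[of e "int n" 1 k] by simp

lemma sw_rho_shift:
  assumes "n > 0"
  shows "sw n (nat ((int j - k) mod int n)) p = sw n j (p + k) - k"
proof -
  have "(p mod int n = (int j - k) mod int n) \<longleftrightarrow> ((p + k) mod int n = int j mod int n)"
       "(p mod int n = ((int j - k) mod int n + 1) mod int n) \<longleftrightarrow>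
        ((p + k) mod int n = (int j + 1) mod int n)"
    using mod_shift_iff[of p "int n" "int j - k" k] mod_shift_iff[of p "int n" "int j - k + 1" k]
    by (simp_all add: mod_add_left_eq)
  then show ?thesis using assms by (simp add: sw_def)
qed

lemma word_perm_rho_shift:
  assumes "n > 0"
  shows "word_perm n (rho_shift n k ws) p = word_perm n ws (p + k) - k"
  by (induction ws arbitrary: p) (simp_all add: rho_shift_def sw_rho_shift[OF assms])

lemma cyl_range:
  assumes "n > 0" shows "cyl n x \<in> {1..n}"
proof -
  have "0 \<le> (x - 1) mod int n" "(x - 1) mod int n < int n" using assms by simp_all
  then show ?thesis by (auto simp: cyl_def)
qed

lemma cyl_eq:
  assumes "i \<in> {1..n}" "x mod int n = int i mod int n"
  shows "cyl n x = i"
proof -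
  have "(x - 1) mod int n = (int i - 1) mod int n" using mod_diff_cong[OF assms(2)] by simp
  also have "\<dots> = int i - 1" using assms(1) by simp
  finally show ?thesis by (simp add: cyl_def)
qed

lemma cyl_periodic: "cyl n (x + int n) = cyl n x"
proof -
  have e: "x + int n - 1 = (x - 1) + int n" by simp
  show ?thesis unfolding cyl_def e mod_add_self2 ..
qed

lemma cyl_mod: "n > 0 \<Longrightarrow> int (cyl n x) mod int n = x mod int n"
  by (simp add: cyl_def mod_add_left_eq)

lemma cyl_surj_window:
  assumes "n > 0" "i \<in> {1..n}"
  obtains p where "e - int n < p" "p \<le> e" "cyl n p = i"
proof
  define p where "p = e - (e - int i) mod int n"
  show "e - int n < p" "p \<le> e" using assms(1) by (simp_all add: p_def)
  have "p mod int n = (e - (e - int i)) mod int n"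
    unfolding p_def by (rule mod_diff_cong) simp_all
  then show "cyl n p = i" using assms(2) by (intro cyl_eq) simp_all
qed

lemma lessdot_range:
  "n > 0 \<Longrightarrow> lessdot n v u i j \<Longrightarrow> i \<in> {1..n} \<and> j \<in> {1..n}"
  unfolding lessdot_def using cyl_range by blast

lemma cut_arr_eq:
  assumes "t < length v"
  shows "cut_arr n v u t x = word_perm n (rev v) (word_perm n (take t v) x)"
proof -
  have "take t (v @ u) = take t v" using assms by simp
  then show ?thesis
    by (simp only: cut_arr_def arr_eq_word_perm take_all length_rev order_refl comp_apply)
qed

lemma lessdot_of_order_reversal:
  assumes n: "n \<ge> 2" and t01: "t0 < t1" "t1 \<le> length v"
    and before: "word_perm n (rev (take t0 v)) l1 < word_perm n (rev (take t0 v)) l2"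
    and after: "word_perm n (rev (take t1 v)) l2 < word_perm n (rev (take t1 v)) l1"
  shows "lessdot n v u (cyl n (word_perm n (rev v) l1)) (cyl n (word_perm n (rev v) l2))"
proof -
  define pos where "pos t l = word_perm n (rev (take t v)) l" for t l
  have pos_inverse: "word_perm n (take t v) (pos t l) = l" for t l
    using word_perm_rev_right_inverse[OF n] by (simp add: pos_def)
  have pos_inj: "pos t l1 \<noteq> pos t l2" for t
  proof
    assume "pos t l1 = pos t l2"
    then have "l1 = l2" using pos_inverse by metis
    then show False using before by simp
  qed
  have "\<not> pos (t0 + 0) l2 < pos (t0 + 0) l1" "pos (t0 + (t1 - t0)) l2 < pos (t0 + (t1 - t0)) l1"
    using before after t01 by (simp_all add: pos_def)
  then obtain s where s: "s < t1 - t0" "\<not> pos (t0 + s) l2 < pos (t0 + s) l1"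
    "pos (t0 + Suc s) l2 < pos (t0 + Suc s) l1"
    using ex_least_nat_less[of "\<lambda>s. pos (t0 + s) l2 < pos (t0 + s) l1" "t1 - t0"] by blast
  define t where "t = t0 + s"
  have tv: "t < length v" using s(1) t01 by (simp add: t_def)
  have step: "pos (Suc t) l = sw n (v ! t) (pos t l)" for l
    using tv by (simp add: pos_def take_Suc_conv_app_nth)
  have lt: "pos t l1 < pos t l2" using s(2) pos_inj[of t] by (simp add: t_def)
  have "sw n (v ! t) (pos t l2) < sw n (v ! t) (pos t l1)" using s(3) step by (simp add: t_def)
  from sw_inversion[OF lt this]
  have adj: "pos t l2 = pos t l1 + 1" and md: "pos t l1 mod int n = int (v ! t) mod int n" .
  from md obtain kk where kk: "pos t l1 = int ((v @ u) ! t) + kk * int n"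
  proof -
    have "int n dvd pos t l1 - int (v ! t)" using md by (simp add: mod_eq_dvd_iff)
    then obtain kk where "pos t l1 - int (v ! t) = int n * kk" by (elim dvdE)
    then show ?thesis using that[of kk] tv by (simp add: nth_append algebra_simps)
  qed
  have "cut_arr n v u t (pos t l) = word_perm n (rev v) l" for l
    using cut_arr_eq[OF tv] pos_inverse by simp
  then have "cyl n (cut_arr n v u t (int ((v @ u) ! t) + kk * int n)) = cyl n (word_perm n (rev v) l1)"
    "cyl n (cut_arr n v u t (int ((v @ u) ! t) + kk * int n + 1)) = cyl n (word_perm n (rev v) l2)"
    using kk adj by (metis, metis)
  moreover have "t < length (v @ u)" using tv by simp
  ultimately show ?thesis
    unfolding lessdot_def by blast
qed

lemma lessdot_of_inversion:
  assumes n: "n \<ge> 2" and v: "length v \<ge> 1"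
    and "p < q" "word_perm n v q < word_perm n v p"
  shows "lessdot n v u (cyl n q) (cyl n p)"
proof -
  have "0 < length v" using v by linarith
  then show ?thesis
    using lessdot_of_order_reversal[OF n, of 0 "length v" v "word_perm n v q" "word_perm n v p" u] assms
    by (simp add: word_perm_rev_left_inverse)
qed

lemma lessdot_of_displacement_gap:
  assumes n: "n \<ge> 2" and v: "length v \<ge> 1"
    and close: "\<bar>p - q\<bar> < int n"
    and gap: "word_perm n v q - q + int n \<le> word_perm n v p - p"
  shows "lessdot n v u (cyl n q) (cyl n p)"
proof -
  consider "p < q" | "q < p" | "p = q" by linarith
  then show ?thesis
  proof cases
    case 1
    then show ?thesis using gap close by (intro lessdot_of_inversion[OF n v]) auto
  next
    case 2
    have "word_perm n v (q + int n) = word_perm n v q + int n"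
      using word_perm_periodic[of n v q 1] by simp
    then have "lessdot n v u (cyl n (q + int n)) (cyl n p)"
      using 2 gap close by (intro lessdot_of_inversion[OF n v]) auto
    then show ?thesis by (simp add: cyl_periodic)
  next
    case 3
    then show ?thesis using gap n by simp
  qed
qed

lemma chamber_label_periodic_image:
  assumes n: "n > 0"
    and per: "\<And>p j. A (p + j * int n) = A p + j * int n"
    and md: "\<And>p. A p mod int n = (p + s) mod int n"
    and p: "q - int n < p" "p \<le> q" "(p + s) mod int n = int i mod int n"
  shows "chamber_label n (A ` {..q}) i = \<lceil>real_of_int (A p) / real n\<rceil>"
proof -
  have "(GREATEST b. b \<in> A ` {..q} \<and> b mod int n = int i mod int n) = A p"
  proof (rule Greatest_equality)
    show "A p \<in> A ` {..q} \<and> A p mod int n = int i mod int n" using p md by auto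
  next
    fix y assume "y \<in> A ` {..q} \<and> y mod int n = int i mod int n"
    then obtain p' where p': "p' \<le> q" "y = A p'" "(p' + s) mod int n = (p + s) mod int n"
      using md p(3) by auto
    then have "int n dvd (p' - p)" by (simp add: mod_eq_dvd_iff)
    then obtain z where "p' - p = int n * z" by (elim dvdE)
    then have z: "p' = p + z * int n" by (simp add: algebra_simps)
    have "z * int n < 1 * int n" using z p p'(1) by linarith
    then have "z \<le> 0" using n mult_less_cancel_right[of z "int n" 1] by simp
    then show "y \<le> A p" using p'(2) z per n by (simp add: mult_nonpos_nonneg)
  qed
  then show ?thesis by (simp add: chamber_label_def)
qed

lemma ceiling_divide_diff:
  fixes a b :: int
  assumes "n > 0" "a mod int n = b mod int n"
  shows "int n * (\<lceil>real_of_int a / real n\<rceil> - \<lceil>real_of_int b / real n\<rceil>) = a - b"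
proof -
  have "int n dvd a - b" using assms(2) by (simp add: mod_eq_dvd_iff)
  then obtain z where z: "a - b = int n * z" by (elim dvdE)
  then have "real_of_int a - real_of_int b = real n * of_int z"
    by (metis of_int_diff of_int_mult of_int_of_nat_eq)
  then have "real_of_int a / real n = real_of_int b / real n + of_int z"
    using assms(1) by (simp add: field_simps)
  then show ?thesis using z by simp
qed

lemma traj_displacement:
  assumes n: "n \<ge> 2" and w: "is_word n v" and g: "glide n v k"
    and e: "word_perm n v e = 1 + k" and p: "e - int n < p" "p \<le> e"
  shows "int n * traj n (rho_shift n k v) (cyl n p)
         = (word_perm n v p - p) - (word_perm n v e - e)"
proof -
  have n0: "n > 0" using n by simp
  define W where "W = word_perm n v"
  define A where "A x = W (x + k) - k" for x
  define i where "i = cyl n p"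
  have A: "arr n (rho_shift n k v) (length (rho_shift n k v)) = A"
    by (simp add: arr_eq_word_perm word_perm_rho_shift[OF n0] A_def W_def fun_eq_iff)
  have the_q: "(THE q. A q = 1) = e - k"
  proof (rule the_equality)
    show "A (e - k) = 1" using e by (simp add: A_def W_def)
  next
    fix q assume "A q = 1"
    then have "W (q + k) = W e" using e by (simp add: A_def W_def)
    then show "q = e - k"
      using word_perm_rev_left_inverse[OF n, of v] by (metis W_def add_diff_cancel_right')
  qed
  have cl_right: "chamber_label n (A ` {..e - k}) i = \<lceil>real_of_int (W p - k) / real n\<rceil>"
  proof -
    have "A (x + j * int n) = A x + j * int n" for x j
      using word_perm_periodic[of n v "x + k" j] by (simp add: A_def W_def algebra_simps)
    moreover have "A x mod int n = (x + k) mod int n" for x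
      using glide_word_perm_mod[OF n w g, of "x + k"] mod_shift_iff[of "W (x + k) - k" "int n" "x + k" k]
      by (simp add: A_def W_def)
    ultimately show ?thesis
      using chamber_label_periodic_image[OF n0, of A k "e - k" "p - k" i] p cyl_mod[OF n0, of p]
      by (simp add: A_def i_def)
  qed
  have p_e: "(p - e + 1) mod int n = p mod int n"
  proof -
    have "(p - e) mod int n = (p - 1) mod int n"
      by (rule mod_diff_cong[OF refl glide_word_perm_mod_one[OF n w g e]])
    then have "(p - e + 1) mod int n = (p - 1 + 1) mod int n" by (rule mod_add_cong) simp
    then show ?thesis by simp
  qed
  have cl_left: "chamber_label n {..1} i = \<lceil>real_of_int (p - e + 1) / real n\<rceil>"
    using chamber_label_periodic_image[OF n0, of id 0 1 "p - e + 1" i] p p_e cyl_mod[OF n0, of p]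
    by (simp add: i_def)
  have "int n * traj n (rho_shift n k v) i
        = int n * (\<lceil>real_of_int (W p - k) / real n\<rceil>
                   - \<lceil>real_of_int (p - e + 1) / real n\<rceil>)"
    by (simp add: traj_def Let_def A the_q cl_right cl_left)
  also have "\<dots> = W p - k - (p - e + 1)"
  proof (rule ceiling_divide_diff[OF n0])
    show "(W p - k) mod int n = (p - e + 1) mod int n"
      using glide_word_perm_mod[OF n w g, of p] mod_shift_iff[of "W p - k" "int n" p k] p_e
      by (simp add: W_def)
  qed
  also have "\<dots> = (W p - p) - (W e - e)" using e by (simp add: W_def)
  finally show ?thesis by (simp add: i_def W_def)
qed

lemma lessdot_of_traj_less:
  assumes n: "n \<ge> 2" and w: "is_word n v" and g: "glide n v k" and v: "length v \<ge> 1"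
    and ij: "i \<in> {1..n}" "j \<in> {1..n}"
    and less: "traj n (rho_shift n k v) j < traj n (rho_shift n k v) i"
  shows "lessdot n v u j i"
proof -
  have n0: "n > 0" using n by simp
  define W where "W = word_perm n v"
  define e where "e = word_perm n (rev v) (1 + k)"
  have e1: "W e = 1 + k" by (simp add: W_def e_def word_perm_rev_right_inverse[OF n])
  obtain pi where pi: "e - int n < pi" "pi \<le> e" "cyl n pi = i" by (rule cyl_surj_window[OF n0 ij(1)])
  obtain pj where pj: "e - int n < pj" "pj \<le> e" "cyl n pj = j" by (rule cyl_surj_window[OF n0 ij(2)])
  have "int n * traj n (rho_shift n k v) j + int n \<le> int n * traj n (rho_shift n k v) i"
    using mult_left_mono[of "traj n (rho_shift n k v) j + 1" "traj n (rho_shift n k v) i" "int n"]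
      less
    by (simp add: algebra_simps)
  moreover have "int n * traj n (rho_shift n k v) i = (W pi - pi) - (W e - e)"
    using traj_displacement[OF n w g e1[unfolded W_def] pi(1,2)] pi(3) by (simp add: W_def)
  moreover have "int n * traj n (rho_shift n k v) j = (W pj - pj) - (W e - e)"
    using traj_displacement[OF n w g e1[unfolded W_def] pj(1,2)] pj(3) by (simp add: W_def)
  ultimately have "W pj - pj + int n \<le> W pi - pi" by linarith
  moreover have "\<bar>pi - pj\<bar> < int n" using pi pj by linarith
  ultimately have "lessdot n v u (cyl n pj) (cyl n pi)"
    unfolding W_def using lessdot_of_displacement_gap[OF n v] by blast
  then show ?thesis using pi pj by simp
qed

lemma word_perm_translation_of_traj_const:
  assumes n: "n \<ge> 2" and w: "is_word n v" and g: "glide n v k"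
    and const:
      "\<And>i. i \<in> {1..n} \<Longrightarrow> traj n (rho_shift n k v) i = traj n (rho_shift n k v) 1"
  shows "\<exists>d. \<forall>p. word_perm n v p = p + d"
proof -
  have n0: "n > 0" using n by simp
  define W where "W = word_perm n v"
  define e where "e = word_perm n (rev v) (1 + k)"
  have e1: "word_perm n v e = 1 + k" by (simp add: e_def word_perm_rev_right_inverse[OF n])
  have e_window: "e - int n < e" "e \<le> e" using n0 by simp_all
  have "cyl n e = 1"
    using glide_word_perm_mod_one[OF n w g e1] n by (intro cyl_eq) simp_all
  then have traj_e: "int n * traj n (rho_shift n k v) 1 = 0"
    using traj_displacement[OF n w g e1 e_window] by simp
  have window: "W p - p = W e - e" if p: "e - int n < p" "p \<le> e" for p
  proof -
    have "traj n (rho_shift n k v) (cyl n p) = traj n (rho_shift n k v) 1"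
      using const[OF cyl_range[OF n0]] .
    then show ?thesis
      using traj_displacement[OF n w g e1 p] traj_e by (simp add: W_def)
  qed
  have "W p = p + (W e - e)" for p
  proof -
    define p' where "p' = e - (e - p) mod int n"
    define z where "z = - ((e - p) div int n)"
    have p': "p = p' + z * int n"
      unfolding p'_def z_def by (simp add: algebra_simps minus_mod_eq_mult_div[symmetric])
    have "W p = W p' + z * int n"
      unfolding p' W_def by (rule word_perm_periodic)
    also have "W p' = p' + (W e - e)" using window[of p'] n0 by (simp add: p'_def)
    finally show ?thesis using p' by simp
  qed
  then show ?thesis unfolding W_def by blast
qed

(* The first letter s_x swaps the wires x and x + 1, and a translation puts them back in
   their original order, so they cross again later. *)
lemma lessdot_both_ways_of_translation:
  assumes n: "n \<ge> 2" and v: "length v \<ge> 1" and transl: "\<And>p. word_perm n v p = p + d"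
  shows "\<exists>a b. lessdot n v u a b \<and> lessdot n v u b a"
proof -
  obtain x rest where v_eq: "v = x # rest" using v by (cases v) auto
  define pos where "pos t l = word_perm n (rev (take t v)) l" for t l
  define l1 where "l1 = int x"
  define l2 where "l2 = int x + 1"
  have start: "pos 0 l1 < pos 0 l2" by (simp add: pos_def l1_def l2_def)
  have swapped: "pos 1 l2 < pos 1 l1"
    using mod_succ_neq[OF n, of "int x"] by (simp add: pos_def v_eq l1_def l2_def sw_def)
  have "pos (length v) l = l - d" for l
    using transl[of "pos (length v) l"] word_perm_rev_right_inverse[OF n, of v l] by (simp add: pos_def)
  then have restored: "pos (length v) l1 < pos (length v) l2" by (simp add: l1_def l2_def)
  then have "1 < length v" using v swapped by (metis le_neq_implies_less less_asym)
  then show ?thesis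
    using lessdot_of_order_reversal[OF n, of 0 1 v l1 l2 u]
      lessdot_of_order_reversal[OF n, of 1 "length v" v l2 l1 u]
      start swapped restored unfolding pos_def by auto
qed

lemma traj_mono_of_lessdot_compatible:
  fixes \<alpha> :: "nat \<Rightarrow> 'a::linorder"
  assumes n: "n \<ge> 2" and w: "is_word n v" and g: "glide n v k" and v: "length v \<ge> 1"
    and compat: "\<And>i j. lessdot n v u i j \<Longrightarrow> \<alpha> i < \<alpha> j"
    and ij: "i \<in> {1..n}" "j \<in> {1..n}" and less: "\<alpha> j < \<alpha> i"
  shows "traj n (rho_shift n k v) j \<le> traj n (rho_shift n k v) i"
proof (rule ccontr)
  assume "\<not> ?thesis"
  then have "lessdot n v u i j" using lessdot_of_traj_less[OF n w g v ij(2,1)] by simp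
  then show False using compat less by (meson less_asym)
qed

lemma traj_nonconstant:
  fixes \<alpha> :: "nat \<Rightarrow> 'a::linorder"
  assumes n: "n \<ge> 2" and w: "is_word n v" and g: "glide n v k" and v: "length v \<ge> 1"
    and compat: "\<And>i j. lessdot n v u i j \<Longrightarrow> \<alpha> i < \<alpha> j"
  shows "\<exists>i\<in>{1..n}. traj n (rho_shift n k v) i \<noteq> traj n (rho_shift n k v) 1"
proof (rule ccontr)
  assume "\<not> ?thesis"
  then obtain s where "\<And>p. word_perm n v p = p + s"
    using word_perm_translation_of_traj_const[OF n w g] by blast
  then obtain a b where "lessdot n v u a b" "lessdot n v u b a"
    using lessdot_both_ways_of_translation[OF n v] by blast
  then show False using compat by (meson less_asym)
qed

lemma sum_mult_neg_of_zero_sum: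
  fixes T x :: "'a \<Rightarrow> real"
  assumes fin: "finite S" and sum0: "(\<Sum>j\<in>S. x j) = 0"
    and nz: "\<And>j. j \<in> S \<Longrightarrow> x j \<noteq> 0"
    and sep: "\<And>i j. i \<in> S \<Longrightarrow> j \<in> S \<Longrightarrow> 0 < x j \<Longrightarrow> x i < 0 \<Longrightarrow> T j \<le> T i"
    and nonconst: "i0 \<in> S" "j0 \<in> S" "T i0 \<noteq> T j0"
  shows "(\<Sum>j\<in>S. T j * x j) < 0"
proof -
  define L where "L = {j \<in> S. 0 < x j}"
  have "L \<noteq> {}"
  proof
    assume "L = {}"
    then have "\<And>j. j \<in> S \<Longrightarrow> x j < 0" using nz by (force simp: L_def)
    then have "(\<Sum>j\<in>S. x j) < (\<Sum>j\<in>S. 0)" using fin nonconst(1) by (intro sum_strict_mono) auto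
    then show False using sum0 by simp
  qed
  define M where "M = Max (T ` L)"
  have below: "T j \<le> M" if "j \<in> L" for j using that fin by (simp add: M_def L_def)
  have above: "M \<le> T i" if "i \<in> S" "x i < 0" for i
  proof -
    have "M \<in> T ` L" using fin \<open>L \<noteq> {}\<close> by (simp add: M_def L_def)
    then show ?thesis using sep that by (auto simp: L_def)
  qed
  have term_le: "(T j - M) * x j \<le> 0" if "j \<in> S" for j
    using below[of j] above[of j] nz[OF that] that
    by (cases "0 < x j") (auto simp: L_def mult_nonpos_nonneg mult_nonneg_nonpos)
  obtain j1 where j1: "j1 \<in> S" "T j1 \<noteq> M" using nonconst by metis
  have "(T j1 - M) * x j1 < 0"
    using below[of j1] above[of j1] nz[OF j1(1)] j1
    by (cases "0 < x j1") (auto simp: L_def mult_neg_pos mult_pos_neg)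
  then have "(\<Sum>j\<in>S. (T j - M) * x j) < 0"
    using fin term_le j1(1) by (intro sum_strict_mono_ex1[where g = "\<lambda>_. 0", simplified]) auto
  also have "(\<Sum>j\<in>S. (T j - M) * x j) = (\<Sum>j\<in>S. T j * x j) - M * (\<Sum>j\<in>S. x j)"
    by (simp add: algebra_simps sum_subtractf sum_distrib_left)
  finally show ?thesis using sum0 by simp
qed

lemma Icc_disjoint_of_connected_component:
  fixes A :: "real set"
  assumes c: "c \<in> connected_component_set (UNIV - A) b"
  shows "{c..b} \<inter> A = {}"
proof -
  let ?C = "connected_component_set (UNIV - A) b"
  have "b \<in> UNIV - A" using c connected_component_eq_empty by (metis empty_iff)
  then have "b \<in> ?C" by simp
  then have "{c..b} \<subseteq> ?C" using c by (intro connected_contains_Icc) simp_all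
  also have "\<dots> \<subseteq> UNIV - A" by (rule connected_component_subset)
  finally show ?thesis by blast
qed

lemma ln_ratio_sign:
  fixes a b c :: real
  assumes "a \<notin> {c..b}" "c < b"
  shows "a < c \<and> 0 < ln ((b - a) / (c - a)) \<or> b < a \<and> ln ((b - a) / (c - a)) < 0"
proof (cases "a < c")
  case True
  then have "1 < (b - a) / (c - a)" using assms(2) by (simp add: less_divide_eq)
  then show ?thesis using True by simp
next
  case False
  then have "b < a" using assms(1) by simp
  then have "0 < (b - a) / (c - a)" "(b - a) / (c - a) < 1"
    using assms(2) by (simp_all add: divide_neg_neg divide_less_eq)
  then show ?thesis using \<open>b < a\<close> by simp
qed

lemma sum_ln_ratio_eq_zero:
  fixes \<alpha> :: "'a \<Rightarrow> real"
  assumes fin: "finite S" and outside: "\<And>j. j \<in> S \<Longrightarrow> \<alpha> j \<notin> {c..b}"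
    and "c < b"
    and prod_eq: "(\<Prod>j\<in>S. b - \<alpha> j) = (\<Prod>j\<in>S. c - \<alpha> j)"
  shows "(\<Sum>j\<in>S. ln ((b - \<alpha> j) / (c - \<alpha> j))) = 0"
proof -
  have nz: "b - \<alpha> j \<noteq> 0" "c - \<alpha> j \<noteq> 0" if "j \<in> S" for j
    using outside[OF that] \<open>c < b\<close> by auto
  then have "(\<Prod>j\<in>S. (b - \<alpha> j) / (c - \<alpha> j)) = 1"
    using fin prod_eq by (simp add: prod_dividef)
  then show ?thesis
    using ln_prod[OF fin, of "\<lambda>j. (b - \<alpha> j) / (c - \<alpha> j)"] nz by simp
qed

theorem proposition8p3:
  fixes n :: nat and u v :: "nat list" and k1 k2 :: int
    and \<alpha> :: "nat \<Rightarrow> real" and b c :: real and t' :: "nat \<Rightarrow> int"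
  assumes n: "n \<ge> 3"
    and u_red: "reduced n u" and u_glide: "glide n u k1"
    and v_red: "reduced n v" and v_glide: "glide n v k2"
    and m: "length v \<ge> 1"
    and vu_red: "reduced n (v @ u)"
    and alpha: "\<And>i j. i \<in> {1..n} \<Longrightarrow> j \<in> {1..n} \<Longrightarrow> lessdot n v u i j \<Longrightarrow> \<alpha> i < \<alpha> j"
    and bc: "b > c"
    and comp: "c \<in> connected_component_set (UNIV - \<alpha> ` {1..n}) b"
    and feq: "(\<Prod>j=1..n. b - \<alpha> j) = (\<Prod>j=1..n. c - \<alpha> j)"
    and rep: "\<exists>d::int. \<forall>i\<in>{1..n}. t' i = traj n (rho_shift n k2 v) i + d"
  shows "(\<Sum>j=1..n. real_of_int (t' j) * ln ((b - \<alpha> j) / (c - \<alpha> j))) < 0"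
proof -
  \<comment> \<open>Reducedness enters only through is_word v; the ordering hypothesis alpha takes
     the place of reducedness where two wires could cross twice.\<close>
  have n2: "n \<ge> 2" and n0: "n > 0" using n by simp_all
  have w: "is_word n v" using v_red by (simp add: reduced_def)
  define x where "x j = ln ((b - \<alpha> j) / (c - \<alpha> j))" for j
  obtain d where d: "\<And>i. i \<in> {1..n} \<Longrightarrow> t' i = traj n (rho_shift n k2 v) i + d"
    using rep by blast
  have compat: "\<alpha> i < \<alpha> j" if "lessdot n v u i j" for i j
    using alpha lessdot_range[OF n0 that] that by blast
  have outside: "\<alpha> j \<notin> {c..b}" if "j \<in> {1..n}" for j
    using Icc_disjoint_of_connected_component[OF comp] that by blast
  have sign: "\<alpha> j < c \<and> 0 < x j \<or> b < \<alpha> j \<and> x j < 0" if "j \<in> {1..n}" for j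
    unfolding x_def using ln_ratio_sign[OF outside[OF that] bc] .
  obtain i0 where
    i0: "i0 \<in> {1..n}" "traj n (rho_shift n k2 v) i0 \<noteq> traj n (rho_shift n k2 v) 1"
    using traj_nonconstant[where u = u and \<alpha> = \<alpha>, OF n2 w v_glide m compat] by blast
  show ?thesis unfolding x_def[symmetric]
  proof (rule sum_mult_neg_of_zero_sum)
    show "finite {1..n}" by simp
    show "(\<Sum>j=1..n. x j) = 0"
      unfolding x_def using outside bc feq by (intro sum_ln_ratio_eq_zero) auto
    show "x j \<noteq> 0" if "j \<in> {1..n}" for j using sign[OF that] by auto
    show "real_of_int (t' j) \<le> real_of_int (t' i)"
      if "i \<in> {1..n}" "j \<in> {1..n}" "0 < x j" "x i < 0" for i j
    proof -
      have "\<alpha> j < \<alpha> i" using sign[OF that(1)] sign[OF that(2)] that(3,4) bc by auto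
      then show ?thesis
        using traj_mono_of_lessdot_compatible[where u = u and \<alpha> = \<alpha>,
            OF n2 w v_glide m compat that(1,2)] d that(1,2)
        by simp
    qed
    show "1 \<in> {1..n}" "i0 \<in> {1..n}" "real_of_int (t' i0) \<noteq> real_of_int (t' 1)"
      using i0 d n0 by auto
  qed
qed

end
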